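(* Let $\delta\in(0,1)$, let $K\in\mathcal T_h$ and $\mathbb B_h\in\mathcal W_h$. Then $\lambda_i^\delta\in[0,1]$ for every $i\in\{1,\dots,d\}$ with $\beta_\delta(\mathbb B^K_i)\neq\beta_\delta(\mathbb B^K_0)$ (in particular its denominator is then strictly positive), and on $K$ the discrete chain rule $$\sum_{j=1}^d\mathbf\Lambda^\delta_{i,j}(\mathbb B_h):\partial_{x_j}\mathcal I_h\big[-\mathbb B_h+\beta_\delta^{-1}(\mathbb B_h)\big]=\partial_{x_i}\mathcal I_h\big[-\operatorname{tr}f_\delta(\mathbb B_h)+\operatorname{tr}\ln\beta_\delta^{-1}(\mathbb B_h)\big],\qquad i=1,\dots,d,$$ holds. If moreover the family $\{\mathcal T_h\}_{h>0}$ is shape regular (i.e. $\sup_{K\in\mathcal T_h}h_K\rho_K^{-1}\le C$, $\rho_K$ the inradius-diameter of $K$), then there is a constant $C$ independent of $h,\delta,K,\mathbb B_h$ such that $$\max_{i,j\in\{1,\dots,d\}}\|\mathbf\Lambda^\delta_{i,j}(\mathbb B_h)\|_{L^\infty(K)}\le C\,\|\mathcal I_h[\beta_\delta(\mathbb B_h)]\|_{L^\infty(K)}.$$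
   Context: $\Omega\subset\mathbb R^d$, $d\in\{2,3\}$, polyhedral, $\mathcal T_h$ a conforming triangulation of $\overline\Omega$ into open simplices, $h_K=\operatorname{diam}K$. $\mathcal W_h$ is the space of continuous functions $\overline\Omega\to\mathbb R^{d\times d}_{\mathrm S}$ (symmetric matrices) which are affine on each $K\in\mathcal T_h$; $\mathcal I_h$ is the nodal (vertex) piecewise-linear interpolation operator, applied componentwise. Matrix functions of symmetric matrices are defined via the spectral decomposition; $\beta_\delta(s)=\max\{s,\delta\}$, $\beta_\delta^{-1}(\mathbb B)$ is the matrix inverse of $\beta_\delta(\mathbb B)$, and $f_\delta(s)=\frac12s^2$ for $s\ge\delta$, $f_\delta(s)=\delta s-\frac12\delta^2$ for $s<\delta$. For $K$ with vertices $P_0^K,\dots,P_d^K$ let $\mathcal B_K(\hat x)=P_0^K+\mathcal A_K\hat x$ be the affine map from the reference simplex onto $K$ ($\mathcal A_K$ nonsingular), and $\mathbb B^K_j:=\mathbb B_h(P_j^K)$. For $i=1,\dots,d$: if $\beta_\delta(\mathbb B_i^K)=\beta_\delta(\mathbb B_0^K)$ set $\hat{\mathbf\Lambda}_i^\delta:=\beta_\delta(\mathbb B_i^K)$; otherwise set $\hat{\mathbf\Lambda}_i^\delta:=\beta_\delta(\mathbb B_i^K)+\lambda_i^\delta(\beta_\delta(\mathbb B_0^K)-\beta_\delta(\mathbb B_i^K))$, where, with $\Delta_i:=\mathbb B_i^K-\beta_\delta^{-1}(\mathbb B_i^K)-\mathbb B_0^K+\beta_\delta^{-1}(\mathbb B_0^K)$,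 $$\lambda_i^\delta:=\frac{-\operatorname{tr}f_\delta(\mathbb B_i^K)+\operatorname{tr}\ln\beta_\delta^{-1}(\mathbb B_i^K)+\operatorname{tr}f_\delta(\mathbb B_0^K)-\operatorname{tr}\ln\beta_\delta^{-1}(\mathbb B_0^K)+\beta_\delta(\mathbb B_i^K):\Delta_i}{(\beta_\delta(\mathbb B_i^K)-\beta_\delta(\mathbb B_0^K)):\Delta_i}.$$ Then on $K$, $\mathbf\Lambda^\delta_{i,j}(\mathbb B_h)|_K:=\sum_{m=1}^d[(\mathcal A_K^\top)^{-1}]_{i,m}\,\hat{\mathbf\Lambda}^\delta_m\,[\mathcal A_K^\top]_{m,j}\in\mathbb R^{d\times d}_{\mathrm S}$ for $i,j\in\{1,\dots,d\}$. *)

theory Defs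
  imports "HOL-Analysis.Analysis"
begin

text \<open>Symmetric d x d matrices are represented as elements of real^'n^'n
  with transpose A = A; the dimension is d = CARD('n).\<close>

definition symmetric_mat :: "real^'n^'n \<Rightarrow> bool" where
  "symmetric_mat A \<longleftrightarrow> transpose A = A"

definition diag_mat :: "real^'n \<Rightarrow> real^'n^'n" where
  "diag_mat l = (\<chi> i j. if i = j then l $ i else 0)"

definition matfun :: "(real \<Rightarrow> real) \<Rightarrow> real^'n^'n \<Rightarrow> real^'n^'n" where
  "matfun f A = (SOME M. \<exists>Q l. orthogonal_matrix Q \<and> A = Q ** diag_mat l ** transpose Q
                     \<and> M = Q ** diag_mat (\<chi> i. f (l $ i)) ** transpose Q)"

definition frob :: "real^'n^'n \<Rightarrow> real^'n^'n \<Rightarrow> real" where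
  "frob A B = (\<Sum>i\<in>UNIV. \<Sum>j\<in>UNIV. A $ i $ j * B $ i $ j)"

definition beta_d :: "real \<Rightarrow> real \<Rightarrow> real" where
  "beta_d \<delta> s = max s \<delta>"

definition f_d :: "real \<Rightarrow> real \<Rightarrow> real" where
  "f_d \<delta> s = (if s \<ge> \<delta> then s^2 / 2 else \<delta> * s - \<delta>^2 / 2)"

definition betaM :: "real \<Rightarrow> real^'n^'n \<Rightarrow> real^'n^'n" where
  "betaM \<delta> B = matfun (beta_d \<delta>) B"

definition betaInvM :: "real \<Rightarrow> real^'n^'n \<Rightarrow> real^'n^'n" where
  "betaInvM \<delta> B = matrix_inv (betaM \<delta> B)"

definition entropy_term :: "real \<Rightarrow> real^'n^'n \<Rightarrow> real" where
  "entropy_term \<delta> B = - trace (matfun (f_d \<delta>) B) + trace (matfun ln (betaInvM \<delta> B))"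

definition dual_term :: "real \<Rightarrow> real^'n^'n \<Rightarrow> real^'n^'n" where
  "dual_term \<delta> B = - B + betaInvM \<delta> B"

definition Delta_i :: "real \<Rightarrow> real^'n^'n \<Rightarrow> real^'n^'n \<Rightarrow> real^'n^'n" where
  "Delta_i \<delta> B0 Bi = Bi - betaInvM \<delta> Bi - B0 + betaInvM \<delta> B0"

definition lam_num :: "real \<Rightarrow> real^'n^'n \<Rightarrow> real^'n^'n \<Rightarrow> real" where
  "lam_num \<delta> B0 Bi =
     - trace (matfun (f_d \<delta>) Bi) + trace (matfun ln (betaInvM \<delta> Bi))
     + trace (matfun (f_d \<delta>) B0) - trace (matfun ln (betaInvM \<delta> B0))
     + frob (betaM \<delta> Bi) (Delta_i \<delta> B0 Bi)"

definition lam_den :: "real \<Rightarrow> real^'n^'n \<Rightarrow> real^'n^'n \<Rightarrow> real" where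
  "lam_den \<delta> B0 Bi = frob (betaM \<delta> Bi - betaM \<delta> B0) (Delta_i \<delta> B0 Bi)"

text \<open>lambda_i^delta for vertex values B0 = B_h(P_0^K), Bi = B_h(P_i^K).\<close>
definition lam :: "real \<Rightarrow> real^'n^'n \<Rightarrow> real^'n^'n \<Rightarrow> real" where
  "lam \<delta> B0 Bi = lam_num \<delta> B0 Bi / lam_den \<delta> B0 Bi"

definition LamHat :: "real \<Rightarrow> real^'n^'n \<Rightarrow> real^'n^'n \<Rightarrow> real^'n^'n" where
  "LamHat \<delta> B0 Bi =
     (if betaM \<delta> Bi = betaM \<delta> B0 then betaM \<delta> Bi
      else betaM \<delta> Bi + lam \<delta> B0 Bi *\<^sub>R (betaM \<delta> B0 - betaM \<delta> Bi))"

text \<open>Lambda^delta_{i,j}(B_h) on K, where A = A_K (columns P_m - P_0),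
  B0 = B_h(P_0^K), B m = B_h(P_m^K).\<close>
definition LamK :: "real \<Rightarrow> real^'n^'n \<Rightarrow> real^'n^'n \<Rightarrow> ('n \<Rightarrow> real^'n^'n) \<Rightarrow> 'n \<Rightarrow> 'n \<Rightarrow> real^'n^'n" where
  "LamK \<delta> A B0 B i j =
     (\<Sum>m\<in>UNIV. (matrix_inv (transpose A) $ i $ m * transpose A $ m $ j) *\<^sub>R LamHat \<delta> B0 (B m))"

definition affA :: "real^'n \<Rightarrow> ('n \<Rightarrow> real^'n) \<Rightarrow> real^'n^'n" where
  "affA P0 P = (\<chi> r c. (P c - P0) $ r)"

definition simplexK :: "real^'n \<Rightarrow> ('n \<Rightarrow> real^'n) \<Rightarrow> (real^'n) set" where
  "simplexK P0 P = interior (convex hull (insert P0 (range P)))"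

text \<open>Nodal P1 interpolant on K of a function with vertex values g0 (at P0) and g m (at P m):
  the unique affine function with these vertex values (via barycentric coordinates).\<close>
definition interpK :: "real^'n \<Rightarrow> ('n \<Rightarrow> real^'n) \<Rightarrow> 'b::real_vector \<Rightarrow> ('n \<Rightarrow> 'b) \<Rightarrow> real^'n \<Rightarrow> 'b" where
  "interpK P0 P g0 g x =
     g0 + (\<Sum>m\<in>UNIV. (matrix_inv (affA P0 P) *v (x - P0)) $ m *\<^sub>R (g m - g0))"

definition pderiv_at :: "(real^'n \<Rightarrow> 'b::real_normed_vector) \<Rightarrow> real^'n \<Rightarrow> 'n \<Rightarrow> 'b" where
  "pderiv_at f x j = frechet_derivative f (at x) (axis j 1)"

definition inball_diam :: "(real^'n) set \<Rightarrow> real" where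
  "inball_diam K = Sup {2 * r | r c. 0 < r \<and> ball c r \<subseteq> K}"

end

theory Submission
  imports Defs
begin

text \<open>Diagonalise B0 = Q diag(x) Q^T and Bi = R diag(y) R^T. Then the numerator and the
  denominator of lam are averages, with the doubly stochastic weights ((Q^T R)_kl)^2, of scalar
  expressions in x_k and y_l built from g(s) = s - 1/beta(s) and F(s) = f(s) + ln beta(s). Since
  F' = beta g' with beta nondecreasing, beta(a) (g b - g a) <= F b - F a <= beta(b) (g b - g a),
  which gives 0 <= numerator <= denominator, and the denominator is positive as soon as
  beta(B0) differs from beta(Bi).

  By the choice of lam, LamHat_i : (dual(B_i) - dual(B_0)) = entropy(B_i) - entropy(B_0) on each
  edge P0 Pi. The gradient of a P1 interpolant is the inverse transpose of A applied to these edge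
  differences, which the conjugation by A^T in Lambda undoes; this is the chain rule. For the bound,
  LamHat_i is a convex combination of beta(B_0) and beta(B_i), whose norms are at most the sup of
  the interpolant, and shape regularity bounds the entries of A by h_K and those of its inverse
  by 2 / rho_K.\<close>

section \<open>Spectral calculus of symmetric matrices\<close>

lemma diag_mat_mul_nth: "(diag_mat l ** C) $ i $ j = l $ i * C $ i $ j"
  by (simp add: matrix_matrix_mult_def diag_mat_def if_distrib[of "\<lambda>x. x * _"] cong: if_cong)

lemma mul_diag_mat_nth: "(C ** diag_mat l) $ i $ j = C $ i $ j * l $ j"
  by (simp add: matrix_matrix_mult_def diag_mat_def if_distrib[of "\<lambda>x. _ * x"] cong: if_cong)

lemma diag_mat_mul_diag_mat: "diag_mat a ** diag_mat b = diag_mat (\<chi> i. a $ i * b $ i)"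
  by (simp add: vec_eq_iff diag_mat_mul_nth) (simp add: diag_mat_def)

lemma diag_mat_one: "diag_mat (\<chi> i. 1) = mat 1"
  by (simp add: vec_eq_iff diag_mat_def mat_def)

lemma matrix_inv_right: "invertible A \<Longrightarrow> A ** matrix_inv A = mat 1"
  and matrix_inv_left: "invertible A \<Longrightarrow> matrix_inv A ** A = mat 1"
  unfolding invertible_def matrix_inv_def by (metis (mono_tags, lifting) someI_ex)+

lemma matrix_inv_unique:
  fixes A B :: "'a::field^'n^'n"
  assumes "A ** B = mat 1" "B ** A = mat 1"
  shows "matrix_inv A = B"
proof -
  have "invertible A" using assms unfolding invertible_def by blast
  then have "B = B ** (A ** matrix_inv A)" by (simp add: matrix_inv_right)
  then show ?thesis by (simp add: matrix_mul_assoc assms)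
qed

lemma matrix_inv_transpose:
  fixes A :: "'a::field^'n^'n"
  assumes "invertible A"
  shows "matrix_inv (transpose A) = transpose (matrix_inv A)"
  using assms by (intro matrix_inv_unique)
    (simp_all add: matrix_transpose_mul[symmetric] matrix_inv_left matrix_inv_right)

definition spectral_mat :: "real^'n^'n \<Rightarrow> real^'n \<Rightarrow> real^'n^'n" where
  "spectral_mat Q l = Q ** diag_mat l ** transpose Q"

lemma spectral_mat_nth: "spectral_mat Q l $ i $ j = (\<Sum>k\<in>UNIV. Q $ i $ k * l $ k * Q $ j $ k)"
  by (simp add: spectral_mat_def matrix_matrix_mult_def[of "Q ** diag_mat l"] mul_diag_mat_nth
      transpose_def matrix_matrix_mult_def[of _ "transpose Q"])

lemma spectral_mat_diff: "spectral_mat Q a - spectral_mat Q b = spectral_mat Q (a - b)"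
  by (simp add: vec_eq_iff spectral_mat_nth sum_subtractf[symmetric] algebra_simps)

lemma spectral_mat_mult:
  assumes "orthogonal_matrix Q"
  shows "spectral_mat Q a ** spectral_mat Q b = spectral_mat Q (\<chi> i. a $ i * b $ i)"
proof -
  have "spectral_mat Q a ** spectral_mat Q b
      = Q ** diag_mat a ** (transpose Q ** Q) ** diag_mat b ** transpose Q"
    by (simp add: spectral_mat_def matrix_mul_assoc)
  also have "\<dots> = Q ** (diag_mat a ** diag_mat b) ** transpose Q"
    using assms by (simp add: orthogonal_matrix matrix_mul_assoc)
  finally show ?thesis by (simp add: diag_mat_mul_diag_mat spectral_mat_def)
qed

lemma spectral_mat_one:
  assumes "orthogonal_matrix Q"
  shows "spectral_mat Q (\<chi> i. 1) = mat 1"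
  using assms by (simp add: spectral_mat_def diag_mat_one orthogonal_matrix_def)

lemma spectral_mat_eq_iff:
  assumes Q: "orthogonal_matrix Q" and R: "orthogonal_matrix R"
  shows "spectral_mat Q a = spectral_mat R b \<longleftrightarrow>
         (\<forall>k l. (transpose Q ** R) $ k $ l \<noteq> 0 \<longrightarrow> a $ k = b $ l)"
proof -
  define C where "C = transpose Q ** R"
  have QQ: "transpose Q ** Q = mat 1" "Q ** transpose Q = mat 1"
    and RR: "transpose R ** R = mat 1" "R ** transpose R = mat 1"
    using Q R by (simp_all add: orthogonal_matrix_def)
  have cancel: "X = Q ** (transpose Q ** X ** R) ** transpose R" for X
    by (metis QQ(2) RR(2) matrix_mul_assoc matrix_mul_lid matrix_mul_rid)
  have left: "transpose Q ** spectral_mat Q a ** R = diag_mat a ** C"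
    unfolding spectral_mat_def C_def by (simp add: matrix_mul_assoc QQ)
  have right: "transpose Q ** spectral_mat R b ** R = C ** diag_mat b"
    unfolding spectral_mat_def C_def by (simp add: matrix_mul_assoc[symmetric] RR)
  have "spectral_mat Q a = spectral_mat R b \<longleftrightarrow> diag_mat a ** C = C ** diag_mat b"
    by (metis cancel left right)
  also have "\<dots> \<longleftrightarrow> (\<forall>k l. a $ k * C $ k $ l = C $ k $ l * b $ l)"
    by (simp add: vec_eq_iff diag_mat_mul_nth mul_diag_mat_nth)
  also have "\<dots> \<longleftrightarrow> (\<forall>k l. C $ k $ l \<noteq> 0 \<longrightarrow> a $ k = b $ l)"
    by (metis mult.commute mult_cancel_left)
  finally show ?thesis by (simp add: C_def)
qed

lemma matfun_spectral_mat:
  assumes Q: "orthogonal_matrix Q"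
  shows "matfun f (spectral_mat Q l) = spectral_mat Q (\<chi> i. f (l $ i))"
proof -
  let ?P = "\<lambda>M. \<exists>R m. orthogonal_matrix R \<and> spectral_mat Q l = spectral_mat R m
                     \<and> M = spectral_mat R (\<chi> i. f (m $ i))"
  have "?P (spectral_mat Q (\<chi> i. f (l $ i)))" using Q by blast
  then have "?P (matfun f (spectral_mat Q l))"
    unfolding matfun_def spectral_mat_def[symmetric] by (rule someI)
  then obtain R m where R: "orthogonal_matrix R" and e: "spectral_mat Q l = spectral_mat R m"
    and M: "matfun f (spectral_mat Q l) = spectral_mat R (\<chi> i. f (m $ i))" by blast
  have "spectral_mat Q (\<chi> i. f (l $ i)) = spectral_mat R (\<chi> i. f (m $ i))"
    using e by (simp add: spectral_mat_eq_iff[OF Q R])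
  with M show ?thesis by simp
qed

lemma symmetric_mat_inner_commute:
  fixes A :: "real^'n^'n"
  assumes "symmetric_mat A"
  shows "(A *v x) \<bullet> y = x \<bullet> (A *v y)"
  using assms unfolding symmetric_mat_def by (metis dot_lmul_matrix vector_transpose_matrix)

lemma linear_le_quadratic_imp_zero:
  fixes c K :: real
  assumes "\<And>t. 2 * t * c \<le> t^2 * K"
  shows "c = 0"
proof (rule ccontr)
  assume c: "c \<noteq> 0"
  define M where "M = \<bar>K\<bar> + 1"
  have M: "0 < M" by (simp add: M_def)
  have "2 * (c / M) * c \<le> (c / M)^2 * K" by (rule assms)
  then have "c^2 * (2 * M) \<le> c^2 * K"
    using M by (simp add: field_simps power2_eq_square)
  then have "2 * M \<le> K" using c by simp
  then show False by (simp add: M_def)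
qed

lemma quadratic_form_max_on_subspace:
  fixes A :: "real^'n^'n"
  assumes S: "subspace S" and x0: "x0 \<in> S" "x0 \<noteq> 0"
  obtains v where "v \<in> S" "norm v = 1" "\<And>x. x \<in> S \<Longrightarrow> x \<bullet> (A *v x) \<le> v \<bullet> (A *v v) * (x \<bullet> x)"
proof -
  define q where "q x = x \<bullet> (A *v x)" for x
  define U where "U = S \<inter> sphere 0 1"
  have "compact U" unfolding U_def
    by (intro closed_Int_compact closed_subspace S compact_sphere)
  moreover have "x0 /\<^sub>R norm x0 \<in> U" unfolding U_def using x0 S by (simp add: subspace_scale)
  moreover have "continuous_on U q" unfolding q_def
    by (intro continuous_intros linear_continuous_on matrix_vector_mul_linear)
  ultimately obtain v where vU: "v \<in> U" and vmax: "\<And>y. y \<in> U \<Longrightarrow> q y \<le> q v"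
    using continuous_attains_sup[of U q] by blast
  have "x \<bullet> (A *v x) \<le> q v * (x \<bullet> x)" if "x \<in> S" for x
  proof (cases "x = 0")
    case False
    have "(1 / norm x) *\<^sub>R x \<in> U" unfolding U_def using that S False by (simp add: subspace_scale)
    then have "q ((1 / norm x) *\<^sub>R x) \<le> q v" by (rule vmax)
    then have "q x \<le> q v * (norm x)^2"
      using False by (simp add: q_def matrix_vector_mult_scaleR field_simps power2_eq_square)
    then show ?thesis by (simp add: q_def power2_norm_eq_inner)
  qed simp
  moreover have "v \<in> S" "norm v = 1" using vU by (auto simp: U_def)
  ultimately show ?thesis using that unfolding q_def by blast
qed

text \<open>The first variation of the Rayleigh quotient at a maximiser vanishes in every
  direction orthogonal to it.\<close>
lemma rayleigh_max_eigenvector: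
  fixes A :: "real^'n^'n"
  assumes sym: "symmetric_mat A" and S: "subspace S" and inv: "\<And>x. x \<in> S \<Longrightarrow> A *v x \<in> S"
    and v: "v \<in> S" "v \<bullet> v = 1"
    and max: "\<And>x. x \<in> S \<Longrightarrow> x \<bullet> (A *v x) \<le> v \<bullet> (A *v v) * (x \<bullet> x)"
  shows "A *v v = (v \<bullet> (A *v v)) *\<^sub>R v"
proof -
  define q where "q x = x \<bullet> (A *v x)" for x
  have orth: "(A *v v) \<bullet> w = 0" if w: "w \<in> S" "w \<bullet> v = 0" for w
  proof (rule linear_le_quadratic_imp_zero[where K = "q v * (w \<bullet> w) - q w"])
    fix t :: real
    have "v + t *\<^sub>R w \<in> S" using v w S by (simp add: subspace_add subspace_scale)
    then have "q (v + t *\<^sub>R w) \<le> q v * ((v + t *\<^sub>R w) \<bullet> (v + t *\<^sub>R w))"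
      using max by (simp add: q_def)
    moreover have "q (v + t *\<^sub>R w) = q v + 2 * t * ((A *v v) \<bullet> w) + t^2 * q w"
      by (simp add: q_def matrix_vector_right_distrib matrix_vector_mult_scaleR inner_add
          symmetric_mat_inner_commute[OF sym] inner_commute[of v "A *v w"] power2_eq_square
          algebra_simps)
    moreover have "(v + t *\<^sub>R w) \<bullet> (v + t *\<^sub>R w) = 1 + t^2 * (w \<bullet> w)"
      using v w by (simp add: inner_add inner_commute[of v w] power2_eq_square algebra_simps)
    ultimately show "2 * t * ((A *v v) \<bullet> w) \<le> t^2 * (q v * (w \<bullet> w) - q w)"
      using v(2) w(2) by (simp add: inner_commute[of v w] power2_eq_square algebra_simps)
  qed
  define u where "u = A *v v - q v *\<^sub>R v"
  have uS: "u \<in> S" unfolding u_def using inv v S by (simp add: subspace_diff subspace_scale)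
  have uv: "u \<bullet> v = 0" unfolding u_def q_def using v
    by (simp add: inner_diff_left inner_commute[of "A *v v" v])
  have "u \<bullet> u = 0"
    using orth[OF uS uv] uv unfolding u_def by (simp add: inner_diff_left inner_commute)
  then show ?thesis by (simp add: u_def q_def)
qed

lemma dim_subspace_orthogonal_to_unit_vector:
  fixes v :: "'a::euclidean_space"
  assumes S: "subspace S" and v: "v \<in> S" "v \<bullet> v = 1"
  shows "dim S = Suc (dim {x \<in> S. x \<bullet> v = 0})"
proof -
  define S' where "S' = {x \<in> S. x \<bullet> v = 0}"
  have S': "subspace S'" unfolding S'_def using S by (auto simp: subspace_def inner_add_left)
  have "S = span (insert v S')"
  proof
    show "S \<subseteq> span (insert v S')"
    proof
      fix x assume "x \<in> S"
      then have "x - (x \<bullet> v) *\<^sub>R v \<in> S'"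
        unfolding S'_def using v S by (simp add: subspace_diff subspace_scale inner_diff_left)
      then have "x - (x \<bullet> v) *\<^sub>R v + (x \<bullet> v) *\<^sub>R v \<in> span (insert v S')"
        by (intro span_add span_mul) (simp_all add: span_base)
      then show "x \<in> span (insert v S')" by simp
    qed
    show "span (insert v S') \<subseteq> S"
      by (rule span_minimal) (use v S in \<open>auto simp: S'_def\<close>)
  qed
  moreover have "v \<notin> S'" using v by (simp add: S'_def)
  then have "v \<notin> span S'" using S' by (metis span_eq_iff)
  ultimately show ?thesis by (metis S'_def dim_insert dim_span Suc_eq_plus1)
qed

lemma symmetric_mat_orthonormal_eigenbasis:
  fixes A :: "real^'n^'n"
  assumes sym: "symmetric_mat A"
  shows "subspace S \<Longrightarrow> (\<forall>x\<in>S. A *v x \<in> S) \<Longrightarrow> dim S = k \<Longrightarrow>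
    \<exists>B. finite B \<and> B \<subseteq> S \<and> card B = k \<and> pairwise orthogonal B \<and>
        (\<forall>v\<in>B. norm v = 1 \<and> (\<exists>\<mu>. A *v v = \<mu> *\<^sub>R v))"
proof (induction k arbitrary: S)
  case 0
  then show ?case by (intro exI[of _ "{}"]) auto
next
  case (Suc k)
  note S = Suc.prems(1) and inv = Suc.prems(2) and dimS = Suc.prems(3)
  obtain x0 where x0: "x0 \<in> S" "x0 \<noteq> 0"
    using dimS by (metis dim_eq_0 nat.distinct(1) subsetI singletonI)
  obtain v where vS: "v \<in> S" and nv: "norm v = 1"
    and max: "\<And>x. x \<in> S \<Longrightarrow> x \<bullet> (A *v x) \<le> v \<bullet> (A *v v) * (x \<bullet> x)"
    using quadratic_form_max_on_subspace[OF S x0] by blast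
  have vv: "v \<bullet> v = 1" using nv by (simp add: norm_eq_1)
  have eig: "A *v v = (v \<bullet> (A *v v)) *\<^sub>R v"
    using rayleigh_max_eigenvector[OF sym S _ vS vv max] inv by blast
  define S' where "S' = {x \<in> S. x \<bullet> v = 0}"
  have S': "subspace S'" unfolding S'_def using S
    by (auto simp: subspace_def inner_add_left)
  have invS': "\<forall>x\<in>S'. A *v x \<in> S'"
  proof
    fix x assume "x \<in> S'"
    then have "x \<in> S" "x \<bullet> v = 0" by (auto simp: S'_def)
    moreover have "(A *v x) \<bullet> v = (v \<bullet> (A *v v)) * (x \<bullet> v)"
      by (subst symmetric_mat_inner_commute[OF sym], subst eig) simp
    ultimately show "A *v x \<in> S'" using inv by (simp add: S'_def)
  qed
  have "dim S' = k"
    using dim_subspace_orthogonal_to_unit_vector[OF S vS vv] dimS by (simp add: S'_def)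
  then obtain B where B: "finite B" "B \<subseteq> S'" "card B = k" "pairwise orthogonal B"
    "\<forall>v\<in>B. norm v = 1 \<and> (\<exists>\<mu>. A *v v = \<mu> *\<^sub>R v)"
    using Suc.IH[OF S' invS'] by blast
  have "v \<notin> B" using B(2) vv by (auto simp: S'_def)
  then show ?case
    using B vS nv eig
    by (intro exI[of _ "insert v B"])
       (auto simp: pairwise_insert orthogonal_def[of v] orthogonal_def[of _ v] S'_def inner_commute)
qed

lemma orthogonal_matrix_of_orthonormal_columns:
  fixes e :: "'n \<Rightarrow> real^'n"
  assumes "\<And>k. norm (e k) = 1" and "\<And>k m. k \<noteq> m \<Longrightarrow> orthogonal (e k) (e m)"
  shows "orthogonal_matrix (\<chi> r k. e k $ r)"
proof -
  have "(transpose (\<chi> r k. e k $ r) ** (\<chi> r k. e k $ r)) $ k $ m = e k \<bullet> e m" for k m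
    by (simp add: matrix_matrix_mult_def transpose_def inner_vec_def)
  then show ?thesis
    using assms by (auto simp: orthogonal_matrix vec_eq_iff mat_def norm_eq_1 orthogonal_def)
qed

lemma symmetric_mat_spectral:
  fixes A :: "real^'n^'n"
  assumes sym: "symmetric_mat A"
  obtains Q l where "orthogonal_matrix Q" "A = spectral_mat Q l"
proof -
  obtain B where B: "finite B" "card B = CARD('n)" "pairwise orthogonal B"
    "\<forall>v\<in>B. norm v = 1 \<and> (\<exists>\<mu>. A *v v = \<mu> *\<^sub>R v)"
    using symmetric_mat_orthonormal_eigenbasis[OF sym subspace_UNIV] by auto
  obtain e where e: "bij_betw e (UNIV::'n set) B"
    using finite_same_card_bij[of "UNIV::'n set" B] B by auto
  obtain mu where mu: "\<And>v. v \<in> B \<Longrightarrow> A *v v = mu v *\<^sub>R v"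
    using B(4) by metis
  have eB: "e k \<in> B" for k using e by (auto simp: bij_betw_def)
  have einj: "e k = e l \<Longrightarrow> k = l" for k l using e by (auto simp: bij_betw_def inj_on_def)
  define Q :: "real^'n^'n" where "Q = (\<chi> r k. e k $ r)"
  define l :: "real^'n" where "l = (\<chi> k. mu (e k))"
  have orthQ: "orthogonal_matrix Q"
    unfolding Q_def using B(4) eB
    by (intro orthogonal_matrix_of_orthonormal_columns) (blast, metis B(3) eB einj pairwise_def)
  have "(A ** Q) $ r $ k = (Q ** diag_mat l) $ r $ k" for r k
  proof -
    have "(A ** Q) $ r $ k = (A *v e k) $ r"
      by (simp add: Q_def matrix_matrix_mult_def matrix_vector_mult_def)
    then show ?thesis using mu[OF eB[of k]] by (simp add: mul_diag_mat_nth Q_def l_def)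
  qed
  then have "A ** Q = Q ** diag_mat l" by (simp add: vec_eq_iff)
  then have "spectral_mat Q l = A ** (Q ** transpose Q)"
    by (simp add: spectral_mat_def matrix_mul_assoc)
  also have "\<dots> = A" using orthQ by (simp add: orthogonal_matrix_def)
  finally show ?thesis using orthQ that by metis
qed

lemma frob_eq_inner: "frob A B = A \<bullet> B"
  by (simp add: frob_def inner_vec_def)

lemma inner_spectral_mat:
  "spectral_mat Q a \<bullet> spectral_mat R b
   = (\<Sum>k\<in>UNIV. \<Sum>l\<in>UNIV. ((transpose Q ** R) $ k $ l)^2 * a $ k * b $ l)"
proof -
  have "spectral_mat Q a \<bullet> spectral_mat R b = (\<Sum>i\<in>UNIV. \<Sum>j\<in>UNIV. \<Sum>k\<in>UNIV. \<Sum>l\<in>UNIV.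
      Q$i$k * a$k * Q$j$k * (R$i$l * b$l * R$j$l))"
    by (simp add: inner_vec_def spectral_mat_nth sum_product)
  also have "\<dots> = (\<Sum>k\<in>UNIV. \<Sum>l\<in>UNIV. \<Sum>i\<in>UNIV. \<Sum>j\<in>UNIV.
      Q$i$k * a$k * Q$j$k * (R$i$l * b$l * R$j$l))"
    by (subst sum.swap, subst (2) sum.swap, subst (3) sum.swap) (rule sum.swap)
  also have "\<dots> = (\<Sum>k\<in>UNIV. \<Sum>l\<in>UNIV. ((transpose Q ** R)$k$l)^2 * a$k * b$l)"
    by (simp add: matrix_matrix_mult_def transpose_def power2_eq_square sum_product
        sum_distrib_left sum_distrib_right algebra_simps)
  finally show ?thesis .
qed

lemma inner_spectral_mat_same:
  assumes "orthogonal_matrix Q"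
  shows "spectral_mat Q a \<bullet> spectral_mat Q b = (\<Sum>k\<in>UNIV. a $ k * b $ k)"
proof -
  have "((transpose Q ** Q) $ k $ l)^2 * a $ k * b $ l = (if l = k then a $ k * b $ k else 0)" for k l
    using assms by (simp add: orthogonal_matrix mat_def)
  then show ?thesis by (simp add: inner_spectral_mat)
qed

lemma trace_spectral_mat:
  assumes "orthogonal_matrix Q"
  shows "trace (spectral_mat Q a) = (\<Sum>k\<in>UNIV. a $ k)"
proof -
  have "trace (spectral_mat Q a) = spectral_mat Q a \<bullet> mat 1"
    by (simp add: trace_def inner_vec_def mat_def if_distrib cong: if_cong)
  also have "\<dots> = spectral_mat Q a \<bullet> spectral_mat Q (\<chi> i. 1)"
    using assms by (simp add: spectral_mat_one)
  finally show ?thesis using assms by (simp add: inner_spectral_mat_same)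
qed

lemma orthogonal_matrix_row_sq_sum:
  assumes "orthogonal_matrix C"
  shows "(\<Sum>l\<in>UNIV. (C $ k $ l)^2) = 1"
proof -
  have "(C ** transpose C) $ k $ k = 1" using assms by (simp add: orthogonal_matrix_def mat_def)
  then show ?thesis by (simp add: matrix_matrix_mult_def transpose_def power2_eq_square)
qed

lemma orthogonal_matrix_column_sq_sum:
  assumes "orthogonal_matrix C"
  shows "(\<Sum>k\<in>UNIV. (C $ k $ l)^2) = 1"
proof -
  have "orthogonal_matrix (transpose C)" using assms by (simp add: orthogonal_matrix_transpose)
  from orthogonal_matrix_row_sq_sum[OF this, of l] show ?thesis by (simp add: transpose_def)
qed

lemma sum_orthogonal_sq_weights_left:
  assumes "orthogonal_matrix C"
  shows "(\<Sum>k\<in>UNIV. \<Sum>l\<in>UNIV. (C $ k $ l)^2 * h k) = (\<Sum>k\<in>UNIV. h k)"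
  by (simp add: sum_distrib_right[symmetric] orthogonal_matrix_row_sq_sum[OF assms])

lemma sum_orthogonal_sq_weights_right:
  assumes "orthogonal_matrix C"
  shows "(\<Sum>k\<in>UNIV. \<Sum>l\<in>UNIV. (C $ k $ l)^2 * h l) = (\<Sum>l\<in>UNIV. h l)"
  by (subst sum.swap) (simp add: sum_distrib_right[symmetric] orthogonal_matrix_column_sq_sum[OF assms])

section \<open>The scalar inequality\<close>

definition g_d :: "real \<Rightarrow> real \<Rightarrow> real" where
  "g_d \<delta> s = s - 1 / beta_d \<delta> s"

definition F_d :: "real \<Rightarrow> real \<Rightarrow> real" where
  "F_d \<delta> s = f_d \<delta> s + ln (beta_d \<delta> s)"

lemma ln_quadratic_bounds:
  fixes a b :: real
  assumes a: "0 < a" and b: "0 < b"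
  shows "a * ((b - 1 / b) - (a - 1 / a)) \<le> (b^2 / 2 + ln b) - (a^2 / 2 + ln a)"
    and "(b^2 / 2 + ln b) - (a^2 / 2 + ln a) \<le> b * ((b - 1 / b) - (a - 1 / a))"
proof -
  have "ln (a / b) \<le> a / b - 1" "ln (b / a) \<le> b / a - 1"
    using a b by (simp_all add: ln_le_minus_one)
  then have l: "1 - a / b \<le> ln b - ln a" "ln b - ln a \<le> b / a - 1"
    using a b by (simp_all add: ln_div)
  have "a * ((b - 1 / b) - (a - 1 / a)) = a * b - a / b - a^2 + 1"
    "b * ((b - 1 / b) - (a - 1 / a)) = b^2 - 1 - a * b + b / a"
    using a b by (simp_all add: field_simps power2_eq_square)
  moreover have "0 \<le> (b - a)^2" by simp
  ultimately show "a * ((b - 1 / b) - (a - 1 / a)) \<le> (b^2 / 2 + ln b) - (a^2 / 2 + ln a)"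
    and "(b^2 / 2 + ln b) - (a^2 / 2 + ln a) \<le> b * ((b - 1 / b) - (a - 1 / a))"
    using l by (simp_all add: power2_eq_square algebra_simps)
qed

lemma F_d_diff_bounds_ordered:
  assumes d: "0 < \<delta>" and ab: "a \<le> b"
  shows "beta_d \<delta> a * (g_d \<delta> b - g_d \<delta> a) \<le> F_d \<delta> b - F_d \<delta> a
       \<and> F_d \<delta> b - F_d \<delta> a \<le> beta_d \<delta> b * (g_d \<delta> b - g_d \<delta> a)"
proof -
  consider "b < \<delta>" | "\<delta> \<le> a" | "a < \<delta>" "\<delta> \<le> b" by linarith
  then show ?thesis
  proof cases
    case 1
    then show ?thesis using ab by (simp add: g_d_def F_d_def beta_d_def f_d_def algebra_simps)
  next
    case 2
    then have "0 < a" "0 < b" using d ab by auto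
    then show ?thesis
      using 2 ab ln_quadratic_bounds[of a b] by (simp add: g_d_def F_d_def beta_d_def f_d_def)
  next
    case 3
    then have b: "0 < b" using d by auto
    have "\<delta> * (\<delta> - a) \<le> b * (\<delta> - a)" using 3 by (intro mult_right_mono) auto
    then show ?thesis
      using 3 ab ln_quadratic_bounds[OF d b]
      by (simp add: g_d_def F_d_def beta_d_def f_d_def power2_eq_square algebra_simps)
  qed
qed

lemma F_d_diff_bounds:
  assumes "0 < \<delta>"
  shows "beta_d \<delta> a * (g_d \<delta> b - g_d \<delta> a) \<le> F_d \<delta> b - F_d \<delta> a"
    and "F_d \<delta> b - F_d \<delta> a \<le> beta_d \<delta> b * (g_d \<delta> b - g_d \<delta> a)"
proof -
  have "beta_d \<delta> a * (g_d \<delta> b - g_d \<delta> a) \<le> F_d \<delta> b - F_d \<delta> a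
      \<and> F_d \<delta> b - F_d \<delta> a \<le> beta_d \<delta> b * (g_d \<delta> b - g_d \<delta> a)"
  proof (cases "a \<le> b")
    case False
    then show ?thesis
      using F_d_diff_bounds_ordered[OF assms, of b a] by (simp add: algebra_simps)
  qed (rule F_d_diff_bounds_ordered[OF assms])
  then show "beta_d \<delta> a * (g_d \<delta> b - g_d \<delta> a) \<le> F_d \<delta> b - F_d \<delta> a"
    and "F_d \<delta> b - F_d \<delta> a \<le> beta_d \<delta> b * (g_d \<delta> b - g_d \<delta> a)" by auto
qed

lemma mono_beta_d: "mono (beta_d \<delta>)"
  by (auto simp: mono_def beta_d_def)

lemma strict_mono_g_d:
  assumes "0 < \<delta>"
  shows "strict_mono (g_d \<delta>)"
proof (rule strict_monoI)
  fix s t :: real assume "s < t"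
  moreover have "1 / beta_d \<delta> t \<le> 1 / beta_d \<delta> s"
    using \<open>s < t\<close> assms by (intro divide_left_mono) (auto simp: beta_d_def)
  ultimately show "g_d \<delta> s < g_d \<delta> t" by (simp add: g_d_def)
qed

definition scalar_lam_num :: "real \<Rightarrow> real \<Rightarrow> real \<Rightarrow> real" where
  "scalar_lam_num \<delta> a b = F_d \<delta> a - F_d \<delta> b + beta_d \<delta> b * (g_d \<delta> b - g_d \<delta> a)"

definition scalar_lam_den :: "real \<Rightarrow> real \<Rightarrow> real \<Rightarrow> real" where
  "scalar_lam_den \<delta> a b = (beta_d \<delta> b - beta_d \<delta> a) * (g_d \<delta> b - g_d \<delta> a)"

lemma scalar_lam_num_nonneg: "0 < \<delta> \<Longrightarrow> 0 \<le> scalar_lam_num \<delta> a b"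
  using F_d_diff_bounds(2)[of \<delta> b a] by (simp add: scalar_lam_num_def)

lemma scalar_lam_num_le_den: "0 < \<delta> \<Longrightarrow> scalar_lam_num \<delta> a b \<le> scalar_lam_den \<delta> a b"
  using F_d_diff_bounds(1)[of \<delta> a b] by (simp add: scalar_lam_num_def scalar_lam_den_def algebra_simps)

lemma scalar_lam_num_eq_0:
  "0 < \<delta> \<Longrightarrow> beta_d \<delta> a = beta_d \<delta> b \<Longrightarrow> scalar_lam_num \<delta> a b = 0"
  using scalar_lam_num_nonneg[of \<delta> a b] scalar_lam_num_le_den[of \<delta> a b]
  by (simp add: scalar_lam_den_def)

lemma scalar_lam_den_pos:
  assumes d: "0 < \<delta>" and ne: "beta_d \<delta> a \<noteq> beta_d \<delta> b"
  shows "0 < scalar_lam_den \<delta> a b"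
proof -
  have "a \<noteq> b" using ne by auto
  then consider "a < b" | "b < a" by linarith
  then show ?thesis
  proof cases
    case 1
    have "beta_d \<delta> a \<le> beta_d \<delta> b" using 1 by (intro monoD[OF mono_beta_d]) simp
    then have "beta_d \<delta> a < beta_d \<delta> b" using ne by simp
    moreover have "g_d \<delta> a < g_d \<delta> b" using 1 by (rule strict_monoD[OF strict_mono_g_d[OF d]])
    ultimately show ?thesis by (simp add: scalar_lam_den_def)
  next
    case 2
    have "beta_d \<delta> b \<le> beta_d \<delta> a" using 2 by (intro monoD[OF mono_beta_d]) simp
    then have "beta_d \<delta> b < beta_d \<delta> a" using ne by simp
    moreover have "g_d \<delta> b < g_d \<delta> a" using 2 by (rule strict_monoD[OF strict_mono_g_d[OF d]])
    ultimately show ?thesis by (simp add: scalar_lam_den_def mult_neg_neg)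
  qed
qed

lemma beta_d_pos: "0 < \<delta> \<Longrightarrow> 0 < beta_d \<delta> s"
  by (simp add: beta_d_def)

lemma beta_d_neq_0: "0 < \<delta> \<Longrightarrow> beta_d \<delta> s \<noteq> 0"
  by (simp add: beta_d_def)

lemma betaM_spectral_mat:
  "orthogonal_matrix Q \<Longrightarrow> betaM \<delta> (spectral_mat Q x) = spectral_mat Q (\<chi> k. beta_d \<delta> (x $ k))"
  by (simp add: betaM_def matfun_spectral_mat)

lemma betaInvM_spectral_mat:
  assumes Q: "orthogonal_matrix Q" and d: "0 < \<delta>"
  shows "betaInvM \<delta> (spectral_mat Q x) = spectral_mat Q (\<chi> k. 1 / beta_d \<delta> (x $ k))"
  unfolding betaInvM_def betaM_spectral_mat[OF Q]
  using Q d by (intro matrix_inv_unique) (simp_all add: spectral_mat_mult spectral_mat_one beta_d_neq_0)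

lemma entropy_term_spectral_mat:
  assumes Q: "orthogonal_matrix Q" and d: "0 < \<delta>"
  shows "entropy_term \<delta> (spectral_mat Q x) = - (\<Sum>k\<in>UNIV. F_d \<delta> (x $ k))"
  using d beta_d_pos[OF d]
  by (simp add: entropy_term_def beta_d_neq_0 betaInvM_spectral_mat[OF Q d] matfun_spectral_mat[OF Q]
      trace_spectral_mat[OF Q] F_d_def ln_div sum.distrib sum_negf)

lemma dual_term_spectral_mat:
  assumes Q: "orthogonal_matrix Q" and d: "0 < \<delta>"
  shows "dual_term \<delta> (spectral_mat Q x) = - spectral_mat Q (\<chi> k. g_d \<delta> (x $ k))"
proof -
  have "dual_term \<delta> (spectral_mat Q x) = - (spectral_mat Q x - spectral_mat Q (\<chi> k. 1 / beta_d \<delta> (x $ k)))"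
    by (simp add: dual_term_def betaInvM_spectral_mat[OF Q d])
  also have "\<dots> = - spectral_mat Q (x - (\<chi> k. 1 / beta_d \<delta> (x $ k)))"
    by (simp only: spectral_mat_diff)
  also have "x - (\<chi> k. 1 / beta_d \<delta> (x $ k)) = (\<chi> k. g_d \<delta> (x $ k))"
    by (simp add: vec_eq_iff g_d_def)
  finally show ?thesis .
qed

lemma lam_num_eq:
  "lam_num \<delta> B0 Bi = entropy_term \<delta> Bi - entropy_term \<delta> B0
     + betaM \<delta> Bi \<bullet> (dual_term \<delta> B0 - dual_term \<delta> Bi)"
  by (simp add: lam_num_def entropy_term_def Delta_i_def dual_term_def frob_eq_inner algebra_simps)

lemma lam_den_eq:
  "lam_den \<delta> B0 Bi = (betaM \<delta> Bi - betaM \<delta> B0) \<bullet> (dual_term \<delta> B0 - dual_term \<delta> Bi)"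
  by (simp add: lam_den_def Delta_i_def dual_term_def frob_eq_inner algebra_simps)

lemma lam_num_den_weighted_sums:
  fixes B0 Bi :: "real^'n^'n"
  assumes d: "0 < \<delta>" and "symmetric_mat B0" "symmetric_mat Bi"
  obtains C :: "real^'n^'n" and x y where
    "lam_num \<delta> B0 Bi = (\<Sum>k\<in>UNIV. \<Sum>l\<in>UNIV. (C $ k $ l)^2 * scalar_lam_num \<delta> (x $ k) (y $ l))"
    "lam_den \<delta> B0 Bi = (\<Sum>k\<in>UNIV. \<Sum>l\<in>UNIV. (C $ k $ l)^2 * scalar_lam_den \<delta> (x $ k) (y $ l))"
    "betaM \<delta> Bi = betaM \<delta> B0 \<longleftrightarrow> (\<forall>k l. C $ k $ l \<noteq> 0 \<longrightarrow> beta_d \<delta> (x $ k) = beta_d \<delta> (y $ l))"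
proof -
  obtain Q x where Q: "orthogonal_matrix Q" and X: "B0 = spectral_mat Q x"
    using symmetric_mat_spectral assms(2) by blast
  obtain R y where R: "orthogonal_matrix R" and Y: "Bi = spectral_mat R y"
    using symmetric_mat_spectral assms(3) by blast
  define C where "C = transpose Q ** R"
  have C: "orthogonal_matrix C" unfolding C_def using Q R by (simp add: orthogonal_matrix_mul)
  let ?w = "\<lambda>k l. (C $ k $ l)^2"
  let ?bx = "\<chi> k. beta_d \<delta> (x $ k)" and ?by = "\<chi> k. beta_d \<delta> (y $ k)"
  let ?gx = "\<chi> k. g_d \<delta> (x $ k)" and ?gy = "\<chi> k. g_d \<delta> (y $ k)"
  have dual: "dual_term \<delta> B0 - dual_term \<delta> Bi = spectral_mat R ?gy - spectral_mat Q ?gx"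
    by (simp add: X Y dual_term_spectral_mat[OF Q d] dual_term_spectral_mat[OF R d])
  have beta: "betaM \<delta> B0 = spectral_mat Q ?bx" "betaM \<delta> Bi = spectral_mat R ?by"
    by (simp_all add: X Y betaM_spectral_mat Q R)
  have ent: "entropy_term \<delta> B0 = - (\<Sum>k\<in>UNIV. \<Sum>l\<in>UNIV. ?w k l * F_d \<delta> (x $ k))"
    "entropy_term \<delta> Bi = - (\<Sum>k\<in>UNIV. \<Sum>l\<in>UNIV. ?w k l * F_d \<delta> (y $ l))"
    by (simp_all add: X Y entropy_term_spectral_mat Q R d
        sum_orthogonal_sq_weights_left[OF C] sum_orthogonal_sq_weights_right[OF C])
  have yy: "spectral_mat R ?by \<bullet> spectral_mat R ?gy
      = (\<Sum>k\<in>UNIV. \<Sum>l\<in>UNIV. ?w k l * (beta_d \<delta> (y $ l) * g_d \<delta> (y $ l)))"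
    by (simp add: inner_spectral_mat_same[OF R] sum_orthogonal_sq_weights_right[OF C])
  have xx: "spectral_mat Q ?bx \<bullet> spectral_mat Q ?gx
      = (\<Sum>k\<in>UNIV. \<Sum>l\<in>UNIV. ?w k l * (beta_d \<delta> (x $ k) * g_d \<delta> (x $ k)))"
    by (simp add: inner_spectral_mat_same[OF Q] sum_orthogonal_sq_weights_left[OF C])
  have yx: "spectral_mat R ?by \<bullet> spectral_mat Q ?gx
      = (\<Sum>k\<in>UNIV. \<Sum>l\<in>UNIV. ?w k l * (g_d \<delta> (x $ k) * beta_d \<delta> (y $ l)))"
    by (subst inner_commute) (simp add: inner_spectral_mat C_def mult.assoc)
  have xy: "spectral_mat Q ?bx \<bullet> spectral_mat R ?gy
      = (\<Sum>k\<in>UNIV. \<Sum>l\<in>UNIV. ?w k l * (beta_d \<delta> (x $ k) * g_d \<delta> (y $ l)))"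
    by (simp add: inner_spectral_mat C_def mult.assoc)
  show ?thesis
  proof
    show "lam_num \<delta> B0 Bi = (\<Sum>k\<in>UNIV. \<Sum>l\<in>UNIV. ?w k l * scalar_lam_num \<delta> (x $ k) (y $ l))"
      unfolding lam_num_eq dual beta ent inner_diff_right yy yx
      by (simp add: scalar_lam_num_def algebra_simps sum.distrib sum_subtractf)
    show "lam_den \<delta> B0 Bi = (\<Sum>k\<in>UNIV. \<Sum>l\<in>UNIV. ?w k l * scalar_lam_den \<delta> (x $ k) (y $ l))"
      unfolding lam_den_eq dual beta inner_diff_right inner_diff_left yy yx xy xx
      by (simp add: scalar_lam_den_def algebra_simps sum.distrib sum_subtractf)
    show "betaM \<delta> Bi = betaM \<delta> B0 \<longleftrightarrow> (\<forall>k l. C $ k $ l \<noteq> 0 \<longrightarrow> beta_d \<delta> (x $ k) = beta_d \<delta> (y $ l))"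
      unfolding beta eq_commute[of "spectral_mat R _"] spectral_mat_eq_iff[OF Q R] C_def by simp
  qed
qed

lemma double_sum_nonneg_ge_term:
  fixes f :: "'a::finite \<Rightarrow> 'b::finite \<Rightarrow> real"
  assumes "\<And>k l. 0 \<le> f k l"
  shows "f k l \<le> (\<Sum>k\<in>UNIV. \<Sum>l\<in>UNIV. f k l)"
proof -
  have "f k l \<le> (\<Sum>l\<in>UNIV. f k l)" by (rule member_le_sum) (auto intro: assms)
  also have "\<dots> \<le> (\<Sum>k\<in>UNIV. \<Sum>l\<in>UNIV. f k l)"
    by (rule member_le_sum) (auto intro: assms sum_nonneg)
  finally show ?thesis .
qed

context
  fixes \<delta> :: real and B0 Bi :: "real^'n^'n"
  assumes d: "0 < \<delta>" and sym: "symmetric_mat B0" "symmetric_mat Bi"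
begin

lemma
  shows lam_num_nonneg: "0 \<le> lam_num \<delta> B0 Bi"
    and lam_num_le_lam_den: "lam_num \<delta> B0 Bi \<le> lam_den \<delta> B0 Bi"
    and lam_num_eq_0: "betaM \<delta> Bi = betaM \<delta> B0 \<Longrightarrow> lam_num \<delta> B0 Bi = 0"
    and lam_den_pos: "betaM \<delta> Bi \<noteq> betaM \<delta> B0 \<Longrightarrow> 0 < lam_den \<delta> B0 Bi"
proof -
  obtain C :: "real^'n^'n" and x y :: "real^'n" where
    num: "lam_num \<delta> B0 Bi = (\<Sum>k\<in>UNIV. \<Sum>l\<in>UNIV. (C $ k $ l)^2 * scalar_lam_num \<delta> (x $ k) (y $ l))"
    and den: "lam_den \<delta> B0 Bi = (\<Sum>k\<in>UNIV. \<Sum>l\<in>UNIV. (C $ k $ l)^2 * scalar_lam_den \<delta> (x $ k) (y $ l))"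
    and eq: "betaM \<delta> Bi = betaM \<delta> B0 \<longleftrightarrow> (\<forall>k l. C $ k $ l \<noteq> 0 \<longrightarrow> beta_d \<delta> (x $ k) = beta_d \<delta> (y $ l))"
    by (rule lam_num_den_weighted_sums[OF d sym])
  show "0 \<le> lam_num \<delta> B0 Bi"
    by (simp add: num sum_nonneg scalar_lam_num_nonneg[OF d])
  show "lam_num \<delta> B0 Bi \<le> lam_den \<delta> B0 Bi"
    by (simp add: num den sum_mono mult_left_mono scalar_lam_num_le_den[OF d])
  show "lam_num \<delta> B0 Bi = 0" if "betaM \<delta> Bi = betaM \<delta> B0"
  proof -
    have z: "(C $ k $ l)^2 * scalar_lam_num \<delta> (x $ k) (y $ l) = 0" for k l
      using that eq scalar_lam_num_eq_0[OF d] by (cases "C $ k $ l = 0") auto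
    show ?thesis unfolding num z by simp
  qed
  show "0 < lam_den \<delta> B0 Bi" if ne: "betaM \<delta> Bi \<noteq> betaM \<delta> B0"
  proof -
    obtain k l where "C $ k $ l \<noteq> 0" "beta_d \<delta> (x $ k) \<noteq> beta_d \<delta> (y $ l)"
      using ne eq by blast
    then have "0 < (C $ k $ l)^2 * scalar_lam_den \<delta> (x $ k) (y $ l)"
      by (simp add: scalar_lam_den_pos[OF d])
    also have "\<dots> \<le> lam_den \<delta> B0 Bi"
      unfolding den
      by (intro double_sum_nonneg_ge_term mult_nonneg_nonneg zero_le_power2
          order_trans[OF scalar_lam_num_nonneg[OF d] scalar_lam_num_le_den[OF d]])
    finally show ?thesis .
  qed
qed

lemma lam_bounds:
  assumes "betaM \<delta> Bi \<noteq> betaM \<delta> B0"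
  shows "0 \<le> lam \<delta> B0 Bi" "lam \<delta> B0 Bi \<le> 1"
  using lam_num_nonneg lam_num_le_lam_den lam_den_pos[OF assms] by (simp_all add: lam_def)

text \<open>The discrete chain rule along the edge from B0 to Bi; lam is chosen to make it hold.\<close>
lemma LamHat_inner_dual_term_diff:
  "LamHat \<delta> B0 Bi \<bullet> (dual_term \<delta> Bi - dual_term \<delta> B0) = entropy_term \<delta> Bi - entropy_term \<delta> B0"
proof (cases "betaM \<delta> Bi = betaM \<delta> B0")
  case True
  then show ?thesis
    using lam_num_eq_0 lam_num_eq[of \<delta> B0 Bi] by (simp add: LamHat_def inner_diff_right)
next
  case False
  then have "lam \<delta> B0 Bi * lam_den \<delta> B0 Bi = lam_num \<delta> B0 Bi"
    using lam_den_pos by (simp add: lam_def)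
  then show ?thesis
    using False lam_num_eq[of \<delta> B0 Bi] lam_den_eq[of \<delta> B0 Bi]
    by (simp add: LamHat_def inner_add_left inner_diff_left inner_diff_right algebra_simps)
qed

end

section \<open>The discrete chain rule\<close>

lemma linear_barycentric_combination:
  fixes M :: "real^'n^'n" and v :: "'n \<Rightarrow> 'b::real_vector"
  shows "linear (\<lambda>h. \<Sum>m\<in>UNIV. (M *v h) $ m *\<^sub>R v m)"
  by (rule linearI)
     (simp_all add: matrix_vector_right_distrib scaleR_add_left sum.distrib
        matrix_vector_mult_scaleR scaleR_sum_right)

lemma interpK_has_derivative:
  fixes g0 :: "'b::real_normed_vector"
  shows "(interpK P0 P g0 g has_derivative
          (\<lambda>h. \<Sum>m\<in>UNIV. (matrix_inv (affA P0 P) *v h) $ m *\<^sub>R (g m - g0))) (at x)"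
proof -
  define L where "L = (\<lambda>h. \<Sum>m\<in>UNIV. (matrix_inv (affA P0 P) *v h) $ m *\<^sub>R (g m - g0))"
  have lin: "linear L" unfolding L_def by (rule linear_barycentric_combination)
  have "interpK P0 P g0 g = (\<lambda>x. L x + (g0 - L P0))"
    using linear_diff[OF lin] by (auto simp: interpK_def L_def algebra_simps)
  moreover have "bounded_linear L" using lin by (simp add: linear_conv_bounded_linear)
  ultimately have "(interpK P0 P g0 g has_derivative L) (at x)"
    by (simp add: has_derivative_add_const bounded_linear_imp_has_derivative)
  then show ?thesis by (simp only: L_def)
qed

lemma pderiv_interpK:
  fixes g0 :: "'b::real_normed_vector"
  shows "pderiv_at (interpK P0 P g0 g) x j = (\<Sum>m\<in>UNIV. matrix_inv (affA P0 P) $ m $ j *\<^sub>R (g m - g0))"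
  using interpK_has_derivative[of P0 P g0 g x]
  by (simp add: pderiv_at_def frechet_derivative_at[symmetric] matrix_vector_mult_basis column_def)

text \<open>Gradients of P1 interpolants transform with the inverse of A, the coefficients of
  LamK with its transpose, and the two cancel.\<close>
lemma sum_inner_contragredient:
  fixes A :: "real^'n^'n" and L D :: "'n \<Rightarrow> 'a::real_inner"
  assumes inv: "invertible A"
  shows "(\<Sum>j\<in>UNIV. (\<Sum>m'\<in>UNIV. (matrix_inv (transpose A) $ i $ m' * transpose A $ m' $ j) *\<^sub>R L m')
                        \<bullet> (\<Sum>m\<in>UNIV. matrix_inv A $ m $ j *\<^sub>R D m))
         = (\<Sum>m\<in>UNIV. matrix_inv A $ m $ i * (L m \<bullet> D m))"
proof -
  define M where "M = matrix_inv A"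
  have MA: "(\<Sum>j\<in>UNIV. M $ m $ j * A $ j $ m') = (if m' = m then 1 else 0)" for m m'
  proof -
    have "(M ** A) $ m $ m' = mat 1 $ m $ m'" using matrix_inv_left[OF inv] by (simp add: M_def)
    then show ?thesis by (simp add: matrix_matrix_mult_def mat_def)
  qed
  have MT: "matrix_inv (transpose A) $ i $ m' = M $ m' $ i" for m'
    unfolding matrix_inv_transpose[OF inv] by (simp add: M_def transpose_def)
  have "(\<Sum>j\<in>UNIV. (\<Sum>m'\<in>UNIV. (matrix_inv (transpose A) $ i $ m' * transpose A $ m' $ j) *\<^sub>R L m')
                        \<bullet> (\<Sum>m\<in>UNIV. matrix_inv A $ m $ j *\<^sub>R D m))
     = (\<Sum>j\<in>UNIV. \<Sum>m\<in>UNIV. \<Sum>m'\<in>UNIV. M $ m' $ i * (L m' \<bullet> D m) * (M $ m $ j * A $ j $ m'))"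
    unfolding MT by (simp add: transpose_def inner_sum_left inner_sum_right
        sum_distrib_left M_def algebra_simps)
  also have "\<dots> = (\<Sum>m\<in>UNIV. \<Sum>j\<in>UNIV. \<Sum>m'\<in>UNIV. M $ m' $ i * (L m' \<bullet> D m) * (M $ m $ j * A $ j $ m'))"
    by (rule sum.swap)
  also have "\<dots> = (\<Sum>m\<in>UNIV. \<Sum>m'\<in>UNIV. M $ m' $ i * (L m' \<bullet> D m) * (\<Sum>j\<in>UNIV. M $ m $ j * A $ j $ m'))"
    by (subst sum.swap) (simp add: sum_distrib_left)
  also have "\<dots> = (\<Sum>m\<in>UNIV. M $ m $ i * (L m \<bullet> D m))"
    by (simp add: MA if_distrib[of "\<lambda>x. _ * x"] cong: if_cong)
  finally show ?thesis by (simp add: M_def)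
qed

lemma LamK_discrete_chain_rule:
  fixes B0 :: "real^'n^'n" and B :: "'n \<Rightarrow> real^'n^'n"
  assumes d: "0 < \<delta>" and sym: "symmetric_mat B0" "\<And>m. symmetric_mat (B m)"
    and inv: "invertible (affA P0 P)"
  shows "(\<Sum>j\<in>UNIV. frob (LamK \<delta> (affA P0 P) B0 B i j)
            (pderiv_at (interpK P0 P (dual_term \<delta> B0) (\<lambda>m. dual_term \<delta> (B m))) x j))
         = pderiv_at (interpK P0 P (entropy_term \<delta> B0) (\<lambda>m. entropy_term \<delta> (B m))) x i"
  using sum_inner_contragredient[OF inv, of i "\<lambda>m. LamHat \<delta> B0 (B m)" "\<lambda>m. dual_term \<delta> (B m) - dual_term \<delta> B0"]
  by (simp add: pderiv_interpK LamK_def frob_eq_inner LamHat_inner_dual_term_diff[OF d sym])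

section \<open>Geometry of the simplex\<close>

lemma affA_mult_axis: "affA P0 P *v axis m 1 = P m - P0"
  by (simp add: matrix_vector_mult_basis column_def affA_def vec_eq_iff)

lemma matrix_inv_affA_vertex:
  assumes "invertible (affA P0 P)"
  shows "matrix_inv (affA P0 P) *v (P m - P0) = axis m 1"
  using matrix_inv_left[OF assms] affA_mult_axis[of P0 P m]
  by (metis matrix_vector_mul_assoc matrix_vector_mul_lid)

lemma interpK_base_vertex: "interpK P0 P g0 g P0 = g0"
  by (simp add: interpK_def)

lemma interpK_vertex:
  assumes "invertible (affA P0 P)"
  shows "interpK P0 P g0 g (P m) = g m"
  by (simp add: interpK_def matrix_inv_affA_vertex[OF assms] axis_def if_distrib[of "\<lambda>x. x *\<^sub>R _"]
      cong: if_cong)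

lemma barycentric_coordinate_bounds:
  assumes inv: "invertible (affA P0 P)" and x: "x \<in> convex hull (insert P0 (range P))"
  shows "0 \<le> (matrix_inv (affA P0 P) *v (x - P0)) $ m \<and> (matrix_inv (affA P0 P) *v (x - P0)) $ m \<le> 1"
proof -
  define M where "M = matrix_inv (affA P0 P)"
  define T where "T = (\<lambda>x. M *v x) -` cbox (M *v P0) (M *v P0 + 1)"
  have T: "T = {x. \<forall>m. 0 \<le> (M *v (x - P0)) $ m \<and> (M *v (x - P0)) $ m \<le> 1}"
    by (simp add: T_def set_eq_iff mem_box_cart matrix_vector_mult_diff_distrib le_diff_eq diff_le_eq
        add.commute)
  have "convex hull (insert P0 (range P)) \<subseteq> T"
  proof (rule hull_minimal)
    show "convex T" unfolding T_def by (intro convex_linear_vimage convex_box matrix_vector_mul_linear)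
    show "insert P0 (range P) \<subseteq> T"
      using matrix_inv_affA_vertex[OF inv] by (auto simp: T M_def axis_def)
  qed
  then show ?thesis using x by (auto simp: T M_def)
qed

lemma affine_hull_simplex_vertices:
  assumes inv: "invertible (affA P0 P)"
  shows "affine hull (insert P0 (range P)) = UNIV"
proof -
  have "(+) (- P0) ` range P = columns (affA P0 P)"
    unfolding columns_image_basis by (auto simp: affA_mult_axis image_iff)
  moreover have "span (columns (affA P0 P)) = UNIV"
    using inv matrix_right_invertible_span_columns[of "affA P0 P"]
    unfolding invertible_def span_vec_eq by blast
  ultimately have "affine hull (insert P0 (range P)) = (+) P0 ` UNIV"
    by (simp add: affine_hull_insert_span_gen)
  then show ?thesis by (simp add: surj_def)
qed

lemma compact_simplex_hull: "compact (convex hull (insert P0 (range (P :: 'n::finite \<Rightarrow> real^'n))))"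
  by (intro compact_convex_hull finite_imp_compact) simp

lemma
  assumes inv: "invertible (affA P0 P)"
  shows simplexK_nonempty: "simplexK P0 P \<noteq> {}"
    and closure_simplexK: "closure (simplexK P0 P) = convex hull (insert P0 (range P))"
proof -
  let ?H = "convex hull (insert P0 (range P))"
  have "rel_interior ?H = interior ?H"
    using affine_hull_simplex_vertices[OF inv] by (intro rel_interior_interior) simp
  moreover have "rel_interior ?H \<noteq> {}" by (simp add: rel_interior_eq_empty)
  ultimately show ne: "simplexK P0 P \<noteq> {}" by (simp add: simplexK_def)
  have "closed ?H" by (rule compact_imp_closed[OF compact_simplex_hull])
  then have "closure (interior ?H) = ?H"
    using convex_closure_interior[of ?H] ne by (simp add: simplexK_def)
  then show "closure (simplexK P0 P) = ?H" by (simp add: simplexK_def)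
qed

lemma bounded_simplexK: "bounded (simplexK P0 P)"
  unfolding simplexK_def
  by (meson bounded_subset compact_simplex_hull compact_imp_bounded interior_subset)

lemma abs_affA_le_diameter:
  assumes inv: "invertible (affA P0 P)"
  shows "\<bar>affA P0 P $ j $ m\<bar> \<le> diameter (simplexK P0 P)"
proof -
  have "\<bar>affA P0 P $ j $ m\<bar> \<le> norm (P m - P0)"
    using component_le_norm_cart[of "P m - P0" j] by (simp add: affA_def)
  also have "\<dots> \<le> diameter (closure (simplexK P0 P))"
    unfolding closure_simplexK[OF inv] dist_norm[symmetric]
    by (rule diameter_bounded_bound)
       (auto intro: hull_inc compact_imp_bounded compact_simplex_hull)
  finally show ?thesis by (simp add: diameter_closure bounded_simplexK)
qed

lemma inball_radii_bdd_above:
  fixes K :: "(real^'n) set"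
  assumes "bounded K"
  shows "bdd_above {2 * r |r c. 0 < r \<and> ball c r \<subseteq> K}"
proof (rule bdd_aboveI)
  fix s assume "s \<in> {2 * r |r c. 0 < r \<and> ball c r \<subseteq> K}"
  then obtain r c where s: "s = 2 * r" and r: "0 < r" and b: "ball c r \<subseteq> K" by blast
  obtain u :: "real^'n" where u: "norm u = 1" using vector_choose_size[of 1] by auto
  have "c \<in> K" "c + (r / 2) *\<^sub>R u \<in> K" using r b u by (auto simp: dist_norm)
  then have "dist c (c + (r / 2) *\<^sub>R u) \<le> diameter K"
    by (rule diameter_bounded_bound[OF assms])
  then show "s \<le> 4 * diameter K" using r u by (simp add: s dist_norm)
qed

lemma inball_diam_pos:
  fixes K :: "(real^'n) set"
  assumes "bounded K" "open K" "K \<noteq> {}"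
  shows "0 < inball_diam K"
proof -
  obtain c r where "0 < r" "ball c r \<subseteq> K" using assms(2,3) by (meson ex_in_conv openE)
  then have "2 * r \<le> inball_diam K"
    unfolding inball_diam_def by (intro cSup_upper inball_radii_bdd_above[OF assms(1)]) blast
  with \<open>0 < r\<close> show ?thesis by simp
qed

lemma inball_diam_le:
  fixes K :: "(real^'n) set"
  assumes "open K" "K \<noteq> {}" and le: "\<And>r c. 0 < r \<Longrightarrow> ball c r \<subseteq> K \<Longrightarrow> 2 * r \<le> b"
  shows "inball_diam K \<le> b"
proof -
  obtain c r where "0 < r" "ball c r \<subseteq> K" using assms(1,2) by (meson ex_in_conv openE)
  then show ?thesis unfolding inball_diam_def by (intro cSup_least) (auto intro: le)
qed

text \<open>Inside a ball of radius r in K, moving by r in direction i changes the m-th barycentric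
  coordinate by r times the (m, i) entry of the inverse of A, and that coordinate stays in [0, 1].\<close>
lemma matrix_inv_affA_inball_diam_bound:
  assumes inv: "invertible (affA P0 P)"
  shows "\<bar>matrix_inv (affA P0 P) $ m $ i\<bar> * inball_diam (simplexK P0 P) \<le> 2"
proof -
  define M where "M = matrix_inv (affA P0 P)"
  have ball: "r * \<bar>M $ m $ i\<bar> \<le> 1" if r: "0 < r" and b: "ball c r \<subseteq> simplexK P0 P" for r c
  proof -
    have "cball c r \<subseteq> closure (simplexK P0 P)" using closure_mono[OF b] r by simp
    then have "c \<in> closure (simplexK P0 P)" "c + r *\<^sub>R axis i 1 \<in> closure (simplexK P0 P)"
      using r by (auto simp: dist_norm)
    then have "0 \<le> (M *v (c - P0)) $ m" "(M *v (c - P0)) $ m \<le> 1"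
      "0 \<le> (M *v (c + r *\<^sub>R axis i 1 - P0)) $ m" "(M *v (c + r *\<^sub>R axis i 1 - P0)) $ m \<le> 1"
      using barycentric_coordinate_bounds[OF inv] unfolding M_def closure_simplexK[OF inv]
      by blast+
    moreover have "(M *v (c + r *\<^sub>R axis i 1 - P0)) $ m = (M *v (c - P0)) $ m + r * M $ m $ i"
    proof -
      have "c + r *\<^sub>R axis i 1 - P0 = (c - P0) + r *\<^sub>R axis i 1" by simp
      then show ?thesis
        by (simp only:) (simp add: matrix_vector_right_distrib matrix_vector_mult_scaleR
            matrix_vector_mult_basis column_def)
    qed
    ultimately show ?thesis using r by (simp add: abs_mult abs_le_iff)
  qed
  show ?thesis
  proof (cases "M $ m $ i = 0")
    case False
    have "inball_diam (simplexK P0 P) \<le> 2 / \<bar>M $ m $ i\<bar>"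
      using ball False by (intro inball_diam_le simplexK_nonempty[OF inv])
        (auto simp: simplexK_def field_simps)
    then show ?thesis using False by (simp add: M_def field_simps)
  qed (simp add: M_def)
qed

section \<open>Bounds on Lambda\<close>

lemma continuous_on_interpK:
  fixes g0 :: "'b::real_normed_vector"
  shows "continuous_on S (interpK P0 P g0 g)"
  by (rule has_derivative_continuous_on)
     (rule has_derivative_at_withinI[OF interpK_has_derivative])

lemma norm_interpK_vertex_le_SUP:
  fixes g0 :: "'b::real_normed_vector"
  assumes inv: "invertible (affA P0 P)" and v: "v \<in> insert P0 (range P)"
  shows "norm (interpK P0 P g0 g v) \<le> (SUP x\<in>simplexK P0 P. norm (interpK P0 P g0 g x))"
proof -
  let ?H = "convex hull (insert P0 (range P))"
  let ?f = "\<lambda>x. norm (interpK P0 P g0 g x)"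
  define S where "S = (SUP x\<in>simplexK P0 P. ?f x)"
  have cont: "continuous_on T ?f" for T by (intro continuous_intros continuous_on_interpK)
  have "bdd_above (?f ` ?H)"
    by (intro bounded_imp_bdd_above compact_imp_bounded compact_continuous_image cont compact_simplex_hull)
  moreover have "?f ` simplexK P0 P \<subseteq> ?f ` ?H"
    unfolding simplexK_def using interior_subset by blast
  ultimately have "?f ` simplexK P0 P \<subseteq> {..S}"
    unfolding S_def by (auto intro: cSUP_upper bdd_above_mono)
  then have "?f ` closure (simplexK P0 P) \<subseteq> {..S}"
    by (intro image_closure_subset cont) simp_all
  moreover have "v \<in> closure (simplexK P0 P)"
    using v by (simp add: closure_simplexK[OF inv] hull_inc)
  ultimately show ?thesis by (auto simp: S_def)
qed

lemma norm_LamHat_le: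
  fixes B0 Bi :: "real^'n^'n"
  assumes d: "0 < \<delta>" and sym: "symmetric_mat B0" "symmetric_mat Bi"
    and b0: "norm (betaM \<delta> B0) \<le> S" and bi: "norm (betaM \<delta> Bi) \<le> S"
  shows "norm (LamHat \<delta> B0 Bi) \<le> S"
proof (cases "betaM \<delta> Bi = betaM \<delta> B0")
  case False
  define l where "l = lam \<delta> B0 Bi"
  have l: "0 \<le> l" "l \<le> 1" using lam_bounds[OF d sym False] by (simp_all add: l_def)
  have "norm (LamHat \<delta> B0 Bi) = norm ((1 - l) *\<^sub>R betaM \<delta> Bi + l *\<^sub>R betaM \<delta> B0)"
    using False by (simp add: LamHat_def l_def algebra_simps)
  also have "\<dots> \<le> (1 - l) * norm (betaM \<delta> Bi) + l * norm (betaM \<delta> B0)"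
    using l by (intro order_trans[OF norm_triangle_ineq]) simp
  also have "\<dots> \<le> (1 - l) * S + l * S"
    using l b0 bi by (intro add_mono mult_left_mono) auto
  finally show ?thesis by (simp add: algebra_simps)
qed (use b0 bi in \<open>simp add: LamHat_def\<close>)

lemma abs_matrix_inv_affA_mult_affA_le:
  assumes inv: "invertible (affA P0 P)"
    and shape: "diameter (simplexK P0 P) \<le> \<sigma> * inball_diam (simplexK P0 P)"
  shows "\<bar>matrix_inv (affA P0 P) $ m $ i * affA P0 P $ j $ m\<bar> \<le> 2 * \<bar>\<sigma>\<bar>"
proof -
  define a where "a = \<bar>matrix_inv (affA P0 P) $ m $ i\<bar>"
  define \<rho> where "\<rho> = inball_diam (simplexK P0 P)"
  have \<rho>: "0 < \<rho>" unfolding \<rho>_def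
    using bounded_simplexK simplexK_nonempty[OF inv] by (intro inball_diam_pos) (simp_all add: simplexK_def)
  have a\<rho>: "a * \<rho> \<le> 2" using matrix_inv_affA_inball_diam_bound[OF inv] by (simp add: a_def \<rho>_def)
  have "\<bar>matrix_inv (affA P0 P) $ m $ i * affA P0 P $ j $ m\<bar> \<le> a * diameter (simplexK P0 P)"
    unfolding a_def abs_mult by (intro mult_left_mono abs_affA_le_diameter[OF inv]) simp
  also have "\<dots> \<le> a * (\<bar>\<sigma>\<bar> * \<rho>)"
    using shape \<rho> by (intro mult_left_mono) (auto simp: a_def \<rho>_def intro: order_trans mult_right_mono)
  also have "\<dots> \<le> \<bar>\<sigma>\<bar> * 2"
    using mult_left_mono[OF a\<rho> abs_ge_zero[of \<sigma>]] by (simp add: mult.left_commute)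
  finally show ?thesis by simp
qed

lemma norm_LamK_le:
  fixes B0 :: "real^'n^'n" and B :: "'n \<Rightarrow> real^'n^'n"
  assumes d: "0 < \<delta>" and sym: "symmetric_mat B0" "\<And>m. symmetric_mat (B m)"
    and inv: "invertible (affA P0 P)"
    and shape: "diameter (simplexK P0 P) \<le> \<sigma> * inball_diam (simplexK P0 P)"
  shows "norm (LamK \<delta> (affA P0 P) B0 B i j)
         \<le> real CARD('n) * (2 * \<bar>\<sigma>\<bar>)
           * (SUP x\<in>simplexK P0 P. norm (interpK P0 P (betaM \<delta> B0) (\<lambda>m. betaM \<delta> (B m)) x))"
proof -
  define S where "S = (SUP x\<in>simplexK P0 P. norm (interpK P0 P (betaM \<delta> B0) (\<lambda>m. betaM \<delta> (B m)) x))"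
  have "norm (betaM \<delta> B0) \<le> S" "norm (betaM \<delta> (B m)) \<le> S" for m
    using norm_interpK_vertex_le_SUP[OF inv, of P0 "betaM \<delta> B0" "\<lambda>m. betaM \<delta> (B m)"]
      norm_interpK_vertex_le_SUP[OF inv, of "P m" "betaM \<delta> B0" "\<lambda>m. betaM \<delta> (B m)"]
    by (simp_all add: S_def interpK_base_vertex interpK_vertex[OF inv])
  then have LamHat: "norm (LamHat \<delta> B0 (B m)) \<le> S" for m
    using norm_LamHat_le[OF d sym(1) sym(2)] by blast
  have coeff: "\<bar>matrix_inv (transpose (affA P0 P)) $ i $ m * transpose (affA P0 P) $ m $ j\<bar> \<le> 2 * \<bar>\<sigma>\<bar>" for m
    using abs_matrix_inv_affA_mult_affA_le[OF inv shape, of m i j]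
    unfolding matrix_inv_transpose[OF inv] by (simp add: transpose_def)
  have "norm (LamK \<delta> (affA P0 P) B0 B i j)
      \<le> (\<Sum>m\<in>UNIV. \<bar>matrix_inv (transpose (affA P0 P)) $ i $ m * transpose (affA P0 P) $ m $ j\<bar>
                    * norm (LamHat \<delta> B0 (B m)))"
    unfolding LamK_def by (rule order_trans[OF norm_sum]) simp
  also have "\<dots> \<le> (\<Sum>m\<in>(UNIV::'n set). 2 * \<bar>\<sigma>\<bar> * S)"
    using coeff LamHat by (intro sum_mono mult_mono) auto
  finally show ?thesis by (simp add: S_def)
qed

theorem lemma2p2:
  assumes dim: "CARD('n::finite) \<in> {2, 3}"
  shows
  "(\<forall>(\<delta>::real) (P0::real^'n) (P::'n \<Rightarrow> real^'n) (B0::real^'n^'n) (B::'n \<Rightarrow> real^'n^'n).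
      0 < \<delta> \<and> \<delta> < 1 \<and> invertible (affA P0 P) \<and> symmetric_mat B0 \<and> (\<forall>m. symmetric_mat (B m)) \<longrightarrow>
        (\<forall>i. betaM \<delta> (B i) \<noteq> betaM \<delta> B0 \<longrightarrow>
              0 < lam_den \<delta> B0 (B i) \<and> 0 \<le> lam \<delta> B0 (B i) \<and> lam \<delta> B0 (B i) \<le> 1)
      \<and> (\<forall>x\<in>simplexK P0 P. \<forall>i.
            (\<Sum>j\<in>UNIV. frob (LamK \<delta> (affA P0 P) B0 B i j)
               (pderiv_at (interpK P0 P (dual_term \<delta> B0) (\<lambda>m. dual_term \<delta> (B m))) x j))
          = pderiv_at (interpK P0 P (entropy_term \<delta> B0) (\<lambda>m. entropy_term \<delta> (B m))) x i))
   \<and> (\<forall>\<sigma>::real. \<exists>C::real. \<forall>(\<delta>::real) (P0::real^'n) (P::'n \<Rightarrow> real^'n) (B0::real^'n^'n) (B::'n \<Rightarrow> real^'n^'n).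
        0 < \<delta> \<and> \<delta> < 1 \<and> invertible (affA P0 P) \<and> symmetric_mat B0 \<and> (\<forall>m. symmetric_mat (B m))
        \<and> diameter (simplexK P0 P) \<le> \<sigma> * inball_diam (simplexK P0 P) \<longrightarrow>
          (\<forall>i j. norm (LamK \<delta> (affA P0 P) B0 B i j)
                 \<le> C * (SUP x\<in>simplexK P0 P. norm (interpK P0 P (betaM \<delta> B0) (\<lambda>m. betaM \<delta> (B m)) x))))"
  apply (intro conjI allI impI ballI)
      apply (elim conjE, rule lam_den_pos; blast)
     apply (elim conjE, rule lam_bounds(1); blast)
    apply (elim conjE, rule lam_bounds(2); blast)
   apply (elim conjE, rule LamK_discrete_chain_rule; blast)
  subgoal for \<sigma>
    by (intro exI[of _ "real CARD('n) * (2 * \<bar>\<sigma>\<bar>)"] allI impI, elim conjE, rule norm_LamK_le; blast)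
  done

end
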